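(* Let $A$ be an $n\times m$ matrix with entries in $[0,1]$, and suppose the row player follows follow-the-regularized-leader with a regularizer $R:\Delta_n\to\mathbb{R}$, i.e. $x_t=\arg\min_{x\in\Delta_n}x^\top\big(\sum_{i=1}^{t-1}Ay_i\big)+R(x)$, where the minimizer is assumed to be unique at every round. If there exists a fully mixed (all entries positive) minimax strategy of the row player, then this algorithm has the stability property: for every minimax strategy $y^*$ of the column player and every round $t$, if $y_t=y^*$ then $x_{t+1}=x_t$.
   Context: Repeated two-player zero-sum game: at round $t$ the row player plays $x_t\in\Delta_n$ and the column player $y_t\in\Delta_m$; the row player minimizes, the column player maximizes $x_t^\top Ay_t$. $v$ is the value of the game; a minimax strategy of the row player is $x$ with $\max_{y\in\Delta_m}x^\top Ay=v$, and of the column player is $y$ with $\min_{x\in\Delta_n}x^\top Ay=v$. *)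

theory Defs
  imports Complex_Main
begin

definition simplex :: "('i::finite \<Rightarrow> real) set" where
  "simplex = {x. (\<forall>i. 0 \<le> x i) \<and> (\<Sum>i\<in>UNIV. x i) = 1}"

definition payoff :: "('i::finite \<Rightarrow> 'j::finite \<Rightarrow> real) \<Rightarrow> ('i \<Rightarrow> real) \<Rightarrow> ('j \<Rightarrow> real) \<Rightarrow> real" where
  "payoff A x y = (\<Sum>i\<in>UNIV. \<Sum>j\<in>UNIV. x i * A i j * y j)"

definition mat_vec :: "('i::finite \<Rightarrow> 'j::finite \<Rightarrow> real) \<Rightarrow> ('j \<Rightarrow> real) \<Rightarrow> 'i \<Rightarrow> real" where
  "mat_vec A y = (\<lambda>i. \<Sum>j\<in>UNIV. A i j * y j)"

definition game_value :: "('i::finite \<Rightarrow> 'j::finite \<Rightarrow> real) \<Rightarrow> real" where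
  "game_value A = (INF x\<in>simplex. SUP y\<in>simplex. payoff A x y)"

definition row_minimax :: "('i::finite \<Rightarrow> 'j::finite \<Rightarrow> real) \<Rightarrow> ('i \<Rightarrow> real) \<Rightarrow> bool" where
  "row_minimax A x \<longleftrightarrow> x \<in> simplex \<and> (SUP y\<in>simplex. payoff A x y) = game_value A"

definition col_minimax :: "('i::finite \<Rightarrow> 'j::finite \<Rightarrow> real) \<Rightarrow> ('j \<Rightarrow> real) \<Rightarrow> bool" where
  "col_minimax A y \<longleftrightarrow> y \<in> simplex \<and> (INF x\<in>simplex. payoff A x y) = game_value A"

definition cum_loss :: "('i::finite \<Rightarrow> 'j::finite \<Rightarrow> real) \<Rightarrow> (nat \<Rightarrow> 'j \<Rightarrow> real) \<Rightarrow> nat \<Rightarrow> 'i \<Rightarrow> real" where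
  "cum_loss A y t = (\<lambda>k. \<Sum>s\<in>{1..<t}. mat_vec A (y s) k)"

definition ftrl_min :: "(('i::finite \<Rightarrow> real) \<Rightarrow> real) \<Rightarrow> ('i \<Rightarrow> real) \<Rightarrow> ('i \<Rightarrow> real) \<Rightarrow> bool" where
  "ftrl_min R L x \<longleftrightarrow> x \<in> simplex \<and>
     (\<forall>x'\<in>simplex. (\<Sum>k\<in>UNIV. x k * L k) + R x \<le> (\<Sum>k\<in>UNIV. x' k * L k) + R x')"

end

theory Submission
  imports Defs
begin

text \<open>A fully mixed minimax strategy of the row player forces every minimax strategy
  \<open>y\<^sup>*\<close> of the column player to be equalizing: \<open>A y\<^sup>* = v \<one>\<close>. Indeed \<open>(A y\<^sup>*)\<^sub>i \<ge> v\<close> for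
  every pure strategy \<open>i\<close>, while the average of these entries under the fully mixed minimax
  strategy is at most \<open>v\<close>, so none of them can exceed \<open>v\<close>. Playing \<open>y\<^sup>*\<close> therefore adds the
  same constant to every coordinate of the cumulative loss, which changes the FTRL objective
  on the simplex only by a constant, so the unique minimizer stays where it is.
  The bounds on the entries of \<open>A\<close> and the hypothesis on the other plays \<open>y\<^sub>s\<close> are
  not needed: payoffs are bounded on the simplex for any finite matrix.\<close>

lemma simplex_sum_eq_1: "x \<in> simplex \<Longrightarrow> (\<Sum>i\<in>UNIV. x i) = 1"
  unfolding simplex_def by simp

lemma simplex_nonneg: "x \<in> simplex \<Longrightarrow> 0 \<le> x i"
  unfolding simplex_def by simp

lemma simplex_le_1:
  assumes "x \<in> simplex"
  shows "x i \<le> 1"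
proof -
  have "x i \<le> (\<Sum>k\<in>UNIV. x k)"
    using assms by (intro member_le_sum) (auto simp: simplex_nonneg)
  then show ?thesis
    using assms by (simp add: simplex_sum_eq_1)
qed

lemma vertex_in_simplex: "(\<lambda>k. if k = i then 1 else 0) \<in> simplex"
  unfolding simplex_def by simp

lemma simplex_sum_mult_add_const:
  assumes "x \<in> simplex"
  shows "(\<Sum>k\<in>UNIV. x k * (L k + c)) = (\<Sum>k\<in>UNIV. x k * L k) + c"
  using assms
  by (simp add: distrib_left sum.distrib sum_distrib_right[symmetric] simplex_sum_eq_1)

lemma payoff_eq_sum_mat_vec: "payoff A x y = (\<Sum>i\<in>UNIV. x i * mat_vec A y i)"
  unfolding payoff_def mat_vec_def by (simp add: sum_distrib_left mult.assoc)

lemma payoff_vertex: "payoff A (\<lambda>k. if k = i then 1 else 0) y = mat_vec A y i"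
  unfolding payoff_eq_sum_mat_vec by (simp add: if_distrib[where f = "\<lambda>c. c * _"] cong: if_cong)

lemma abs_payoff_le:
  assumes "x \<in> simplex" "y \<in> simplex"
  shows "\<bar>payoff A x y\<bar> \<le> (\<Sum>i\<in>UNIV. \<Sum>j\<in>UNIV. \<bar>A i j\<bar>)"
proof -
  have "\<bar>payoff A x y\<bar> \<le> (\<Sum>i\<in>UNIV. \<Sum>j\<in>UNIV. \<bar>x i * A i j * y j\<bar>)"
    unfolding payoff_def by (rule order_trans[OF sum_abs sum_mono[OF sum_abs]])
  also have "\<dots> \<le> (\<Sum>i\<in>UNIV. \<Sum>j\<in>UNIV. \<bar>A i j\<bar>)"
  proof (intro sum_mono)
    fix i j
    have "\<bar>x i\<bar> * \<bar>A i j\<bar> * \<bar>y j\<bar> \<le> 1 * \<bar>A i j\<bar> * 1"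
      using assms by (intro mult_mono) (auto simp: simplex_nonneg simplex_le_1)
    then show "\<bar>x i * A i j * y j\<bar> \<le> \<bar>A i j\<bar>"
      by (simp add: abs_mult)
  qed
  finally show ?thesis .
qed

lemma row_minimax_payoff_le_game_value:
  assumes "row_minimax A x" "y \<in> simplex"
  shows "payoff A x y \<le> game_value A"
proof -
  have x_simplex: "x \<in> simplex"
    using assms(1) unfolding row_minimax_def by simp
  have "bdd_above ((\<lambda>y. payoff A x y) ` simplex)"
    using abs_payoff_le[OF x_simplex, of _ A]
    by (intro bdd_aboveI[where M = "\<Sum>i\<in>UNIV. \<Sum>j\<in>UNIV. \<bar>A i j\<bar>"]) (auto simp: abs_le_iff)
  from cSUP_upper[OF assms(2) this] show ?thesis
    using assms(1) unfolding row_minimax_def by simp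
qed

lemma col_minimax_game_value_le_mat_vec:
  assumes "col_minimax A y"
  shows "game_value A \<le> mat_vec A y i"
proof -
  have y_simplex: "y \<in> simplex"
    using assms unfolding col_minimax_def by simp
  have "bdd_below ((\<lambda>x. payoff A x y) ` simplex)"
    using abs_payoff_le[OF _ y_simplex, of _ A]
    by (intro bdd_belowI[where m = "- (\<Sum>i\<in>UNIV. \<Sum>j\<in>UNIV. \<bar>A i j\<bar>)"])
      (auto simp: abs_le_iff minus_le_iff)
  then have "game_value A \<le> payoff A (\<lambda>k. if k = i then 1 else 0) y"
    using cINF_lower[OF _ vertex_in_simplex] assms unfolding col_minimax_def by metis
  then show ?thesis
    by (simp add: payoff_vertex)
qed

lemma col_minimax_equalizing:
  assumes row: "row_minimax A x" and mixed: "\<And>i. 0 < x i" and col: "col_minimax A y"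
  shows "mat_vec A y i = game_value A"
proof -
  let ?gap = "\<lambda>k. x k * (mat_vec A y k - game_value A)"
  have x_simplex: "x \<in> simplex" and y_simplex: "y \<in> simplex"
    using row col unfolding row_minimax_def col_minimax_def by auto
  have gap_nonneg: "0 \<le> ?gap k" for k
    using mixed[of k] col_minimax_game_value_le_mat_vec[OF col, of k] by simp
  have "(\<Sum>k\<in>UNIV. ?gap k) = payoff A x y - game_value A"
    using simplex_sum_mult_add_const[OF x_simplex, of "mat_vec A y" "- game_value A"]
    by (simp add: payoff_eq_sum_mat_vec)
  also have "\<dots> \<le> 0"
    using row_minimax_payoff_le_game_value[OF row y_simplex] by simp
  finally have "(\<Sum>k\<in>UNIV. ?gap k) \<le> 0" .
  then have "(\<Sum>k\<in>UNIV. ?gap k) = 0"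
    using sum_nonneg[of UNIV ?gap] gap_nonneg by force
  then have "?gap i = 0"
    using sum_nonneg_eq_0_iff[of UNIV ?gap] gap_nonneg by simp
  then show ?thesis
    using mixed[of i] by simp
qed

lemma ftrl_min_add_const:
  assumes "ftrl_min R L x"
  shows "ftrl_min R (\<lambda>k. L k + c) x"
  using assms unfolding ftrl_min_def by (simp add: simplex_sum_mult_add_const)

lemma cum_loss_Suc:
  assumes "1 \<le> t"
  shows "cum_loss A y (Suc t) = (\<lambda>k. cum_loss A y t k + mat_vec A (y t) k)"
proof -
  have "{1..<Suc t} = insert t {1..<t}"
    using assms by auto
  then show ?thesis
    unfolding cum_loss_def by (simp add: add.commute)
qed

theorem theorem19:
  fixes A :: "'n::finite \<Rightarrow> 'm::finite \<Rightarrow> real"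
    and R :: "('n \<Rightarrow> real) \<Rightarrow> real"
    and x :: "nat \<Rightarrow> 'n \<Rightarrow> real"
    and y :: "nat \<Rightarrow> 'm \<Rightarrow> real"
    and ystar :: "'m \<Rightarrow> real"
    and t :: nat
  assumes entries: "\<And>i j. 0 \<le> A i j \<and> A i j \<le> 1"
    and ys: "\<And>s. s \<ge> 1 \<Longrightarrow> y s \<in> simplex"
    and ftrl: "\<And>s. s \<ge> 1 \<Longrightarrow> ftrl_min R (cum_loss A y s) (x s)"
    and unique: "\<And>s x'. s \<ge> 1 \<Longrightarrow> ftrl_min R (cum_loss A y s) x' \<Longrightarrow> x' = x s"
    and mixed: "\<exists>xs. row_minimax A xs \<and> (\<forall>i. xs i > 0)"
    and ystar: "col_minimax A ystar"
    and t: "t \<ge> 1"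
    and yt: "y t = ystar"
  shows "x (Suc t) = x t"
proof -
  obtain xs where "row_minimax A xs" "\<And>i. 0 < xs i"
    using mixed by blast
  then have "mat_vec A (y t) = (\<lambda>k. game_value A)"
    using col_minimax_equalizing ystar yt by blast
  then have "ftrl_min R (cum_loss A y (Suc t)) (x t)"
    using ftrl_min_add_const[OF ftrl[OF t]] by (simp add: cum_loss_Suc[OF t])
  then show ?thesis
    using unique[of "Suc t"] by simp
qed

end
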